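(* Consider the SBCM with parameters $\gamma>0$ and $\delta\ge0$, and let $\mathbf{x}$ be a linearly stable steady state. Then for each persuadable node $i\in\mathcal{P}$ there exists a neighbor $j\sim i$ such that $$|x_i-x_j|\le\sqrt{\max\{\delta,\gamma^{-1}\}}.$$
   Context: Let $\mathcal{G}$ be a finite undirected unweighted graph without self-loops, with node set $\mathcal{N}$, adjacency written $i\sim j$, partitioned into zealots $\mathcal{Z}$ and persuadable nodes $\mathcal{P}=\mathcal{N}\setminus\mathcal{Z}$ (each persuadable node has at least one neighbor). The influence function is $w(x_i,x_j)=\frac{1}{1+e^{\gamma(x_i-x_j)^2-\gamma\delta}}$ if $i\sim j$ and $0$ otherwise. The SBCM is $\frac{dx_i}{dt}=f_i(\mathbf{x})=\frac{\sum_j w(x_i,x_j)(x_j-x_i)}{\sum_j w(x_i,x_j)}$ for $i\in\mathcal{P}$ and $\frac{dx_i}{dt}=0$ for $i\in\mathcal{Z}$. A steady state is $\mathbf{x}$ with all $f_i(\mathbf{x})=0$. It is linearly stable if all eigenvalues of $\mathbf{J}_{\mathcal{P}}=(\partial f_i/\partial x_j)_{i,j\in\mathcal{P}}$ at $\mathbf{x}$ are strictly negative. *)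

theory Defs
  imports "HOL-Analysis.Analysis"
begin

definition sbcm_graph :: "'a set \<Rightarrow> ('a \<Rightarrow> 'a \<Rightarrow> bool) \<Rightarrow> 'a set \<Rightarrow> bool" where
  "sbcm_graph N adj Z \<longleftrightarrow> finite N \<and> Z \<subseteq> N
     \<and> (\<forall>i j. adj i j \<longrightarrow> i \<in> N \<and> j \<in> N)
     \<and> (\<forall>i j. adj i j \<longrightarrow> adj j i)
     \<and> (\<forall>i. \<not> adj i i)
     \<and> (\<forall>i \<in> N - Z. \<exists>j. adj i j)"

definition sbcm_w :: "real \<Rightarrow> real \<Rightarrow> ('a \<Rightarrow> 'a \<Rightarrow> bool) \<Rightarrow> 'a \<Rightarrow> 'a \<Rightarrow> real \<Rightarrow> real \<Rightarrow> real" where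
  "sbcm_w \<gamma> \<delta> adj i j xi xj =
     (if adj i j then 1 / (1 + exp (\<gamma> * (xi - xj)\<^sup>2 - \<gamma> * \<delta>)) else 0)"

definition sbcm_f :: "real \<Rightarrow> real \<Rightarrow> 'a set \<Rightarrow> ('a \<Rightarrow> 'a \<Rightarrow> bool) \<Rightarrow> ('a \<Rightarrow> real) \<Rightarrow> 'a \<Rightarrow> real" where
  "sbcm_f \<gamma> \<delta> N adj x i =
     (\<Sum>j\<in>N. sbcm_w \<gamma> \<delta> adj i j (x i) (x j) * (x j - x i))
     / (\<Sum>j\<in>N. sbcm_w \<gamma> \<delta> adj i j (x i) (x j))"

text \<open>Steady state: f_i(x) = 0 for all persuadable i (zealots have zero derivative).\<close>
definition sbcm_steady :: "real \<Rightarrow> real \<Rightarrow> 'a set \<Rightarrow> ('a \<Rightarrow> 'a \<Rightarrow> bool) \<Rightarrow> 'a set \<Rightarrow> ('a \<Rightarrow> real) \<Rightarrow> bool" where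
  "sbcm_steady \<gamma> \<delta> N adj Z x \<longleftrightarrow> (\<forall>i \<in> N - Z. sbcm_f \<gamma> \<delta> N adj x i = 0)"

definition sbcm_jac :: "real \<Rightarrow> real \<Rightarrow> 'a set \<Rightarrow> ('a \<Rightarrow> 'a \<Rightarrow> bool) \<Rightarrow> ('a \<Rightarrow> real) \<Rightarrow> 'a \<Rightarrow> 'a \<Rightarrow> real" where
  "sbcm_jac \<gamma> \<delta> N adj x i j = deriv (\<lambda>t. sbcm_f \<gamma> \<delta> N adj (x(j := t)) i) (x j)"

definition is_eigenvalue_on :: "'a set \<Rightarrow> ('a \<Rightarrow> 'a \<Rightarrow> real) \<Rightarrow> complex \<Rightarrow> bool" where
  "is_eigenvalue_on P M mu \<longleftrightarrow> (\<exists>v :: 'a \<Rightarrow> complex. (\<exists>i \<in> P. v i \<noteq> 0)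
      \<and> (\<forall>i \<in> P. (\<Sum>j\<in>P. complex_of_real (M i j) * v j) = mu * v i))"

definition sbcm_lin_stable :: "real \<Rightarrow> real \<Rightarrow> 'a set \<Rightarrow> ('a \<Rightarrow> 'a \<Rightarrow> bool) \<Rightarrow> 'a set \<Rightarrow> ('a \<Rightarrow> real) \<Rightarrow> bool" where
  "sbcm_lin_stable \<gamma> \<delta> N adj Z x \<longleftrightarrow> sbcm_steady \<gamma> \<delta> N adj Z x \<and>
     (\<forall>mu. is_eigenvalue_on (N - Z) (sbcm_jac \<gamma> \<delta> N adj x) mu \<longrightarrow> Im mu = 0 \<and> Re mu < 0)"

end

theory Submission
  imports Defs
begin

text \<open>
  At a steady state the numerator of \<open>f\<^sub>i\<close> vanishes, so the quotient rule gives
  \<open>J\<^sub>P = D\<^sup>-\<^sup>1 L\<close>: \<open>D\<close> is the positive diagonal of weighted degrees and \<open>L\<close> is symmetric,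
  with \<open>L\<^sub>i\<^sub>j = g(x\<^sub>i - x\<^sub>j)\<close> for neighbours \<open>i \<noteq> j\<close> and \<open>L\<^sub>i\<^sub>i = - \<Sum>\<^sub>j\<^sub>\<sim>\<^sub>i g(x\<^sub>i - x\<^sub>j)\<close>,
  where \<open>g(s) = (s w(s))'\<close>. Now \<open>g(s) < 0\<close> as soon as \<open>s\<^sup>2 > max \<delta> (1/\<gamma>)\<close>, so a persuadable
  node all of whose neighbours are that far away has \<open>L\<^sub>i\<^sub>i > 0\<close>. Hence the maximum of the
  Rayleigh quotient \<open>u\<^sup>T L u / u\<^sup>T D u\<close> is positive, and a maximiser solves \<open>L v = \<lambda> D v\<close>:
  it is an eigenvector of \<open>J\<^sub>P\<close> with eigenvalue \<open>\<lambda> > 0\<close>, contradicting linear stability.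
\<close>

section \<open>Quadratic forms and the Rayleigh quotient\<close>

definition qform :: "'a set \<Rightarrow> ('a \<Rightarrow> 'a \<Rightarrow> real) \<Rightarrow> ('a \<Rightarrow> real) \<Rightarrow> real" where
  "qform P L u = (\<Sum>a\<in>P. \<Sum>b\<in>P. u a * L a b * u b)"

definition diag_mat :: "('a \<Rightarrow> real) \<Rightarrow> 'a \<Rightarrow> 'a \<Rightarrow> real" where
  "diag_mat D a b = (if a = b then D a else 0)"

lemma qform_cong: "(\<And>a. a \<in> P \<Longrightarrow> u a = v a) \<Longrightarrow> qform P L u = qform P L v"
  unfolding qform_def by (intro sum.cong refl) auto

lemma qform_zero [simp]: "qform P L (\<lambda>_. 0) = 0"
  by (simp add: qform_def)

lemma qform_scale: "qform P L (\<lambda>a. c * u a) = c\<^sup>2 * qform P L u"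
  unfolding qform_def by (simp add: sum_distrib_left power2_eq_square algebra_simps)

lemma qform_diff_scale: "qform P (\<lambda>a b. c * M a b - L a b) u = c * qform P M u - qform P L u"
  unfolding qform_def by (simp add: sum_distrib_left sum_subtractf algebra_simps)

lemma qform_diag_mat:
  assumes "finite P"
  shows "qform P (diag_mat D) u = (\<Sum>a\<in>P. D a * (u a)\<^sup>2)"
  unfolding qform_def diag_mat_def using assms
  by (intro sum.cong refl) (simp add: if_distrib[of "\<lambda>x. x * _"] if_distrib[of "\<lambda>x. _ * x"] power2_eq_square cong: if_cong)

lemma sum_diag_mat:
  assumes "finite P" "k \<in> P"
  shows "(\<Sum>b\<in>P. diag_mat D k b * v b) = D k * v k"
  unfolding diag_mat_def using assms by (simp add: if_distrib[of "\<lambda>x. x * _"] cong: if_cong)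

lemma qform_delta:
  assumes "finite P" "i \<in> P"
  shows "qform P L (\<lambda>a. if a = i then s else 0) = s\<^sup>2 * L i i"
  unfolding qform_def using assms
  by (simp add: if_distrib[of "\<lambda>x. x * _"] if_distrib[of "\<lambda>x. _ * x"] power2_eq_square cong: if_cong)

lemma qform_add_delta:
  assumes "finite P" "k \<in> P" "\<forall>a\<in>P. \<forall>b\<in>P. L a b = L b a"
  shows "qform P L (\<lambda>a. v a + (if a = k then t else 0))
       = qform P L v + 2 * t * (\<Sum>b\<in>P. L k b * v b) + t\<^sup>2 * L k k"
proof -
  define d where "d = (\<lambda>a. if a = k then t else 0)"
  have "qform P L (\<lambda>a. v a + d a) = qform P L v + (\<Sum>a\<in>P. d a * (\<Sum>b\<in>P. L a b * v b))
        + (\<Sum>a\<in>P. \<Sum>b\<in>P. v a * L a b * d b) + qform P L d"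
    unfolding qform_def by (simp add: algebra_simps sum.distrib sum_distrib_left)
  also have "(\<Sum>a\<in>P. d a * (\<Sum>b\<in>P. L a b * v b)) = t * (\<Sum>b\<in>P. L k b * v b)"
    using assms(1,2) by (simp add: d_def if_distrib[of "\<lambda>x. x * _"] cong: if_cong)
  also have "(\<Sum>a\<in>P. \<Sum>b\<in>P. v a * L a b * d b) = t * (\<Sum>a\<in>P. L k a * v a)"
    using assms by (simp add: d_def if_distrib[of "\<lambda>x. _ * x"] sum_distrib_left algebra_simps cong: if_cong)
  also have "qform P L d = t\<^sup>2 * L k k"
    unfolding d_def using qform_delta[OF assms(1,2)] .
  finally show ?thesis by (simp add: d_def)
qed

lemma continuous_map_qform:
  "finite P \<Longrightarrow> continuous_map (product_topology (\<lambda>_. euclideanreal) P) euclideanreal (qform P L)"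
  unfolding qform_def
  by (intro continuous_map_sum continuous_map_real_mult
      continuous_map_product_projection continuous_map_const[THEN iffD2]) auto

lemma linear_coeff_zero_if_nonneg:
  fixes a b :: real
  assumes "\<And>t. a * t + b * t\<^sup>2 \<ge> 0"
  shows "a = 0"
proof (rule ccontr)
  assume "a \<noteq> 0"
  define e where "e = 1 / (\<bar>b\<bar> + 1)"
  have "e > 0" "b * e < 1"
    unfolding e_def by (auto simp: field_simps)
  have "a * (-a*e) + b * (-a*e)\<^sup>2 = a\<^sup>2 * e * (b*e - 1)"
    by (simp add: power2_eq_square algebra_simps)
  also have "\<dots> < 0"
    using \<open>e > 0\<close> \<open>b * e < 1\<close> \<open>a \<noteq> 0\<close> by (intro mult_pos_neg) auto
  finally show False
    using assms by (metis not_le)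
qed

lemma psd_qform_zero_imp_kernel:
  assumes "finite P" "k \<in> P" "\<forall>a\<in>P. \<forall>b\<in>P. K a b = K b a"
    and "\<And>u. qform P K u \<ge> 0" and "qform P K v = 0"
  shows "(\<Sum>b\<in>P. K k b * v b) = 0"
proof -
  have "2 * (\<Sum>b\<in>P. K k b * v b) * t + K k k * t\<^sup>2 \<ge> 0" for t
    using assms(4)[of "\<lambda>a. v a + (if a = k then t else 0)"]
    unfolding qform_add_delta[OF assms(1-3)] assms(5) by (simp add: algebra_simps)
  then show ?thesis
    using linear_coeff_zero_if_nonneg[of "2 * (\<Sum>b\<in>P. K k b * v b)" "K k k"] by simp
qed

lemma compactin_ellipsoid:
  assumes "finite P" and D_pos: "\<forall>a\<in>P. D a > 0"
  shows "compactin (product_topology (\<lambda>_. euclideanreal) P)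
           {u \<in> topspace (product_topology (\<lambda>_. euclideanreal) P). qform P (diag_mat D) u = 1}"
    (is "compactin ?X ?S")
proof -
  define c where "c = 1 + (\<Sum>a\<in>P. 1 / D a)"
  have inv_sum_nonneg: "(\<Sum>a\<in>P. 1 / D a) \<ge> 0"
    using D_pos by (intro sum_nonneg) (simp add: less_imp_le)
  have "?S \<subseteq> PiE P (\<lambda>_. {-c..c})"
  proof (intro subsetI PiE_I)
    fix u a assume u: "u \<in> ?S" and a: "a \<in> P"
    have "D a * (u a)\<^sup>2 \<le> 1"
      using u member_le_sum[of a P "\<lambda>a. D a * (u a)\<^sup>2"] a D_pos assms(1)
      by (auto simp: qform_diag_mat less_imp_le)
    then have "(u a)\<^sup>2 \<le> 1 / D a"
      using D_pos a by (simp add: field_simps)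
    also have "1 / D a \<le> (\<Sum>a\<in>P. 1 / D a)"
      using assms a by (intro member_le_sum) auto
    also have "\<dots> \<le> c\<^sup>2"
      using inv_sum_nonneg unfolding c_def by (simp add: power2_eq_square algebra_simps)
    finally show "u a \<in> {-c..c}"
      using abs_le_square_iff[of "u a" c] inv_sum_nonneg by (auto simp: c_def)
  next
    fix u a assume "u \<in> ?S" "a \<notin> P"
    then show "u a = undefined" by (auto simp: PiE_def extensional_def)
  qed
  moreover have "compactin ?X (PiE P (\<lambda>_. {-c..c}))"
    by (simp add: compactin_PiE compactin_euclidean_iff)
  moreover have "closedin ?X {u \<in> topspace ?X. qform P (diag_mat D) u \<in> {1}}"
    by (rule closedin_continuous_map_preimage[OF continuous_map_qform[OF assms(1)]]) simp
  ultimately show ?thesis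
    using closed_compactin by simp blast
qed

lemma qform_le_of_ellipsoid_bound:
  assumes "finite P" and D_pos: "\<forall>a\<in>P. D a > 0"
    and bound: "\<And>w. w \<in> extensional P \<Longrightarrow> qform P (diag_mat D) w = 1 \<Longrightarrow> qform P L w \<le> m"
  shows "qform P L u \<le> m * qform P (diag_mat D) u"
proof (cases "qform P (diag_mat D) u = 0")
  case True
  then have "\<forall>a\<in>P. u a = 0"
    using assms(1) D_pos by (simp add: qform_diag_mat sum_nonneg_eq_0_iff less_imp_le) (metis less_irrefl)
  then show ?thesis
    using True qform_cong[of P u "\<lambda>_. 0"] by simp
next
  case False
  then have pos: "qform P (diag_mat D) u > 0"
    using assms(1) D_pos by (simp add: qform_diag_mat sum_nonneg less_imp_le order_less_le)
  define s where "s = 1 / sqrt (qform P (diag_mat D) u)"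
  have s2: "s\<^sup>2 * qform P (diag_mat D) u = 1"
    using pos by (simp add: s_def power_divide)
  have scaled: "qform P M (restrict (\<lambda>a. s * u a) P) = s\<^sup>2 * qform P M u" for M
    using qform_cong[of P "restrict (\<lambda>a. s * u a) P" "\<lambda>a. s * u a"] qform_scale[of P M s u] by simp
  then have "s\<^sup>2 * qform P L u \<le> m"
    using bound[of "restrict (\<lambda>a. s * u a) P"] s2 by simp
  then have "(s\<^sup>2 * qform P L u) * qform P (diag_mat D) u \<le> m * qform P (diag_mat D) u"
    using pos by (simp add: mult_right_mono)
  then show ?thesis
    using s2 by (simp add: mult.commute mult.left_commute)
qed

lemma qform_max_on_ellipsoid:
  assumes "finite P" and D_pos: "\<forall>a\<in>P. D a > 0" and "i \<in> P"
  obtains v where "qform P (diag_mat D) v = 1"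
    and "\<And>u. qform P L u \<le> qform P L v * qform P (diag_mat D) u"
proof -
  let ?X = "product_topology (\<lambda>_. euclideanreal) P"
  let ?S = "{u \<in> topspace ?X. qform P (diag_mat D) u = 1}"
  have "restrict (\<lambda>a. if a = i then 1 / sqrt (D i) else 0) P \<in> ?S"
    using qform_delta[OF assms(1,3), of "diag_mat D"] D_pos[rule_format, OF assms(3)]
      qform_cong[of P "restrict (\<lambda>a. if a = i then 1 / sqrt (D i) else 0) P"]
    by (simp add: diag_mat_def power_divide)
  moreover have "compact (qform P L ` ?S)"
    using image_compactin[OF compactin_ellipsoid[OF assms(1,2)] continuous_map_qform[OF assms(1)]]
    by (simp add: compactin_euclidean_iff)
  ultimately obtain v where v: "v \<in> ?S" and v_max: "\<And>w. w \<in> ?S \<Longrightarrow> qform P L w \<le> qform P L v"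
    using compact_attains_sup[of "qform P L ` ?S"] by blast
  have "qform P L u \<le> qform P L v * qform P (diag_mat D) u" for u
    using v_max by (intro qform_le_of_ellipsoid_bound[OF assms(1,2)]) (simp add: PiE_def)
  with v that show ?thesis
    by blast
qed

lemma generalized_eigenvector_pos:
  fixes D :: "'a \<Rightarrow> real"
  assumes "finite P" and D_pos: "\<forall>a\<in>P. D a > 0" and L_sym: "\<forall>a\<in>P. \<forall>b\<in>P. L a b = L b a"
    and "i \<in> P" "L i i > 0"
  obtains lam v where "lam > 0" "\<exists>k\<in>P. v k \<noteq> 0"
    "\<forall>k\<in>P. (\<Sum>j\<in>P. L k j * v j) = lam * D k * v k"
proof -
  obtain v where v_norm: "qform P (diag_mat D) v = 1"
    and v_max: "\<And>u. qform P L u \<le> qform P L v * qform P (diag_mat D) u"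
    using qform_max_on_ellipsoid[OF assms(1,2,4)] by blast
  define lam where "lam = qform P L v"
  have "L i i \<le> lam * D i"
    using v_max[of "\<lambda>a. if a = i then 1 else 0"] assms(1,4)
    by (simp add: lam_def qform_delta diag_mat_def)
  then have "lam > 0"
    using assms(4,5) D_pos by (metis zero_less_mult_pos2 order_less_le_trans)
  moreover have "\<exists>k\<in>P. v k \<noteq> 0"
    using v_norm by (metis qform_cong qform_zero zero_neq_one)
  moreover have "(\<Sum>j\<in>P. L k j * v j) = lam * D k * v k" if "k \<in> P" for k
  proof -
    define K where "K = (\<lambda>a b. lam * diag_mat D a b - L a b)"
    have "qform P K u \<ge> 0" for u
      unfolding K_def qform_diff_scale using v_max[of u] by (simp add: lam_def)
    moreover have "qform P K v = 0"
      unfolding K_def qform_diff_scale using v_norm by (simp add: lam_def)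
    moreover have "\<forall>a\<in>P. \<forall>b\<in>P. K a b = K b a"
      using L_sym by (simp add: K_def diag_mat_def)
    ultimately have "(\<Sum>j\<in>P. K k j * v j) = 0"
      using psd_qform_zero_imp_kernel[OF assms(1) that] by blast
    then show ?thesis
      using sum_diag_mat[OF assms(1) that, of D v]
      by (simp add: K_def left_diff_distrib sum_subtractf mult.assoc flip: sum_distrib_left)
  qed
  ultimately show ?thesis
    using that by blast
qed

lemma is_eigenvalue_on_row_scaled:
  assumes "\<forall>k\<in>P. \<forall>j. M k j = L k j / D k" "\<forall>k\<in>P. D k \<noteq> 0"
    and "\<exists>k\<in>P. v k \<noteq> 0" "\<forall>k\<in>P. (\<Sum>j\<in>P. L k j * v j) = lam * D k * v k"
  shows "is_eigenvalue_on P M (complex_of_real lam)"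
  unfolding is_eigenvalue_on_def
proof (intro exI[of _ "\<lambda>j. complex_of_real (v j)"] conjI ballI)
  show "\<exists>k\<in>P. complex_of_real (v k) \<noteq> 0"
    using assms(3) by simp
next
  fix k assume "k \<in> P"
  then have "(\<Sum>j\<in>P. M k j * v j) = lam * v k"
    using assms(1,2,4) by (simp add: sum_divide_distrib[symmetric])
  then show "(\<Sum>j\<in>P. complex_of_real (M k j) * complex_of_real (v j)) = complex_of_real lam * complex_of_real (v k)"
    by (metis (no_types, lifting) of_real_mult of_real_sum sum.cong)
qed

section \<open>The influence function\<close>

definition sbcm_infl :: "real \<Rightarrow> real \<Rightarrow> real \<Rightarrow> real" where
  "sbcm_infl \<gamma> \<delta> s = 1 / (1 + exp (\<gamma> * s\<^sup>2 - \<gamma> * \<delta>))"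

definition sbcm_flux_slope :: "real \<Rightarrow> real \<Rightarrow> real \<Rightarrow> real" where
  "sbcm_flux_slope \<gamma> \<delta> s =
     (1 + exp (\<gamma> * s\<^sup>2 - \<gamma> * \<delta>) - 2 * \<gamma> * s\<^sup>2 * exp (\<gamma> * s\<^sup>2 - \<gamma> * \<delta>))
       / (1 + exp (\<gamma> * s\<^sup>2 - \<gamma> * \<delta>))\<^sup>2"

lemma sbcm_w_eq_infl: "sbcm_w \<gamma> \<delta> adj i k a b = (if adj i k then sbcm_infl \<gamma> \<delta> (a - b) else 0)"
  by (simp add: sbcm_w_def sbcm_infl_def)

lemma sbcm_infl_pos: "sbcm_infl \<gamma> \<delta> s > 0"
  unfolding sbcm_infl_def by (simp add: add_pos_pos)

lemma sbcm_infl_differentiable: "sbcm_infl \<gamma> \<delta> differentiable at s"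
proof -
  have "1 + exp (\<gamma> * s\<^sup>2 - \<gamma> * \<delta>) \<noteq> 0"
    by (smt (verit) exp_gt_zero)
  then have "(sbcm_infl \<gamma> \<delta> has_real_derivative
      - (2 * \<gamma> * s * exp (\<gamma> * s\<^sup>2 - \<gamma> * \<delta>)) / (1 + exp (\<gamma> * s\<^sup>2 - \<gamma> * \<delta>))\<^sup>2) (at s)"
    unfolding sbcm_infl_def[abs_def]
    by (auto intro!: derivative_eq_intros simp: field_simps power2_eq_square)
  then show ?thesis
    using real_differentiable_def by blast
qed

lemma has_real_derivative_sbcm_flux:
  "((\<lambda>s. s * sbcm_infl \<gamma> \<delta> s) has_real_derivative sbcm_flux_slope \<gamma> \<delta> s) (at s)"
proof -
  have "1 + exp (\<gamma> * s\<^sup>2 - \<gamma> * \<delta>) \<noteq> 0"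
    by (smt (verit) exp_gt_zero)
  then show ?thesis
    unfolding sbcm_infl_def sbcm_flux_slope_def
    by (auto intro!: derivative_eq_intros simp: field_simps power2_eq_square)
qed

lemma sbcm_flux_slope_minus [simp]: "sbcm_flux_slope \<gamma> \<delta> (- s) = sbcm_flux_slope \<gamma> \<delta> s"
  by (simp add: sbcm_flux_slope_def)

lemma sbcm_flux_slope_neg:
  assumes "\<gamma> > 0" and far: "sqrt (max \<delta> (1 / \<gamma>)) < \<bar>s\<bar>"
  shows "sbcm_flux_slope \<gamma> \<delta> s < 0"
proof -
  define e where "e = exp (\<gamma> * s\<^sup>2 - \<gamma> * \<delta>)"
  have "max \<delta> (1 / \<gamma>) < s\<^sup>2"
    using far by (metis real_sqrt_abs real_sqrt_less_iff)
  then have "\<delta> < s\<^sup>2" "1 < \<gamma> * s\<^sup>2"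
    using assms(1) by (auto simp: field_simps)
  then have "1 < e"
    using assms(1) by (simp add: e_def algebra_simps)
  moreover have "2 * e * 1 < 2 * e * (\<gamma> * s\<^sup>2)"
    using \<open>1 < \<gamma> * s\<^sup>2\<close> \<open>1 < e\<close> by (intro mult_strict_left_mono) auto
  ultimately have "1 + e - 2 * \<gamma> * s\<^sup>2 * e < 0"
    by (simp only: mult_ac)
  moreover have "(1 + e)\<^sup>2 > 0"
    using \<open>1 < e\<close> by simp
  ultimately show ?thesis
    unfolding sbcm_flux_slope_def e_def[symmetric] by (rule divide_neg_pos)
qed

section \<open>The Jacobian at a steady state\<close>

lemma has_real_derivative_fun_upd:
  "((\<lambda>t. (x(j := t)) k) has_real_derivative (if k = j then 1 else 0)) (at a)"
  by (cases "k = j") (auto intro!: derivative_eq_intros)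

lemma deriv_quotient_at_root:
  fixes n d :: "real \<Rightarrow> real"
  assumes "(n has_real_derivative n') (at a)" "d differentiable at a" "n a = 0" "d a \<noteq> 0"
  shows "deriv (\<lambda>t. n t / d t) a = n' / d a"
proof -
  obtain d' where "(d has_real_derivative d') (at a)"
    using assms(2) real_differentiableE by blast
  from DERIV_divide[OF assms(1) this assms(4)]
  have "((\<lambda>t. n t / d t) has_real_derivative (n' * d a - n a * d') / (d a * d a)) (at a)" .
  then show ?thesis
    using assms(3,4) by (simp add: DERIV_imp_deriv)
qed

definition sbcm_degree :: "real \<Rightarrow> real \<Rightarrow> 'a set \<Rightarrow> ('a \<Rightarrow> 'a \<Rightarrow> bool) \<Rightarrow> ('a \<Rightarrow> real) \<Rightarrow> 'a \<Rightarrow> real" where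
  "sbcm_degree \<gamma> \<delta> N adj x i = (\<Sum>k\<in>N. sbcm_w \<gamma> \<delta> adj i k (x i) (x k))"

definition sbcm_jac_numer :: "real \<Rightarrow> real \<Rightarrow> 'a set \<Rightarrow> ('a \<Rightarrow> 'a \<Rightarrow> bool) \<Rightarrow> ('a \<Rightarrow> real) \<Rightarrow> 'a \<Rightarrow> 'a \<Rightarrow> real" where
  "sbcm_jac_numer \<gamma> \<delta> N adj x i j = (\<Sum>k\<in>N. if adj i k then
      ((if k = j then 1 else 0) - (if i = j then 1 else 0)) * sbcm_flux_slope \<gamma> \<delta> (x i - x k) else 0)"

lemma has_real_derivative_sbcm_numerator:
  "((\<lambda>t. \<Sum>k\<in>N. sbcm_w \<gamma> \<delta> adj i k ((x(j := t)) i) ((x(j := t)) k) * ((x(j := t)) k - (x(j := t)) i))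
     has_real_derivative sbcm_jac_numer \<gamma> \<delta> N adj x i j) (at (x j))"
  unfolding sbcm_jac_numer_def
proof (rule DERIV_sum)
  fix k
  let ?d = "\<lambda>t. (x(j := t)) i - (x(j := t)) k"
  have "((\<lambda>t. - (?d t * sbcm_infl \<gamma> \<delta> (?d t))) has_real_derivative
      - (sbcm_flux_slope \<gamma> \<delta> (?d (x j)) * ((if i = j then 1 else 0) - (if k = j then 1 else 0)))) (at (x j))"
    by (intro DERIV_minus DERIV_chain2[OF has_real_derivative_sbcm_flux]
        DERIV_diff has_real_derivative_fun_upd)
  then show "((\<lambda>t. sbcm_w \<gamma> \<delta> adj i k ((x(j := t)) i) ((x(j := t)) k) * ((x(j := t)) k - (x(j := t)) i))
      has_real_derivative (if adj i k then ((if k = j then 1 else 0) - (if i = j then 1 else 0))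
        * sbcm_flux_slope \<gamma> \<delta> (x i - x k) else 0)) (at (x j))"
    by (cases "adj i k") (simp_all add: sbcm_w_eq_infl algebra_simps)
qed

lemma sbcm_degree_differentiable:
  assumes "finite N"
  shows "(\<lambda>t. \<Sum>k\<in>N. sbcm_w \<gamma> \<delta> adj i k ((x(j := t)) i) ((x(j := t)) k)) differentiable at a"
proof (intro differentiable_sum[OF assms] ballI)
  fix k
  have "(\<lambda>t. (x(j := t)) i - (x(j := t)) k) differentiable at a"
    unfolding real_differentiable_def
    by (rule exI, rule DERIV_diff[OF has_real_derivative_fun_upd has_real_derivative_fun_upd])
  then have "(\<lambda>t. sbcm_infl \<gamma> \<delta> ((x(j := t)) i - (x(j := t)) k)) differentiable at a"
    by (rule differentiable_compose[OF sbcm_infl_differentiable])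
  then show "(\<lambda>t. sbcm_w \<gamma> \<delta> adj i k ((x(j := t)) i) ((x(j := t)) k)) differentiable at a"
    by (cases "adj i k") (simp_all only: sbcm_w_eq_infl if_True if_False differentiable_const)
qed

lemma sbcm_jac_at_steady:
  assumes "finite N" "sbcm_f \<gamma> \<delta> N adj x i = 0" "sbcm_degree \<gamma> \<delta> N adj x i \<noteq> 0"
  shows "sbcm_jac \<gamma> \<delta> N adj x i j = sbcm_jac_numer \<gamma> \<delta> N adj x i j / sbcm_degree \<gamma> \<delta> N adj x i"
proof -
  define num where "num = (\<lambda>t. \<Sum>k\<in>N. sbcm_w \<gamma> \<delta> adj i k ((x(j := t)) i) ((x(j := t)) k)
    * ((x(j := t)) k - (x(j := t)) i))"
  define den where "den = (\<lambda>t. \<Sum>k\<in>N. sbcm_w \<gamma> \<delta> adj i k ((x(j := t)) i) ((x(j := t)) k))"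
  have den_x: "den (x j) = sbcm_degree \<gamma> \<delta> N adj x i"
    by (simp only: den_def sbcm_degree_def fun_upd_triv)
  have "deriv (\<lambda>t. num t / den t) (x j) = sbcm_jac_numer \<gamma> \<delta> N adj x i j / den (x j)"
  proof (rule deriv_quotient_at_root)
    show "(num has_real_derivative sbcm_jac_numer \<gamma> \<delta> N adj x i j) (at (x j))"
      unfolding num_def by (rule has_real_derivative_sbcm_numerator)
    show "den differentiable at (x j)"
      unfolding den_def by (rule sbcm_degree_differentiable[OF assms(1)])
    show "num (x j) = 0"
      using assms(2,3) unfolding sbcm_f_def sbcm_degree_def by (simp only: num_def fun_upd_triv) simp
    show "den (x j) \<noteq> 0"
      using assms(3) den_x by simp
  qed
  moreover have "(\<lambda>t. sbcm_f \<gamma> \<delta> N adj (x(j := t)) i) = (\<lambda>t. num t / den t)"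
    by (simp add: sbcm_f_def num_def den_def)
  ultimately show ?thesis
    by (simp add: sbcm_jac_def den_x)
qed

lemma sbcm_degree_pos:
  assumes "sbcm_graph N adj Z" "i \<in> N - Z"
  shows "sbcm_degree \<gamma> \<delta> N adj x i > 0"
proof -
  obtain b where "adj i b" "b \<in> N"
    using assms unfolding sbcm_graph_def by blast
  then show ?thesis
    using assms(1) sbcm_infl_pos unfolding sbcm_degree_def sbcm_graph_def
    by (intro sum_pos2[of N b]) (auto simp: sbcm_w_eq_infl less_imp_le)
qed

lemma sbcm_jac_numer_offdiag:
  assumes "finite N" "a \<noteq> b" "b \<in> N"
  shows "sbcm_jac_numer \<gamma> \<delta> N adj x a b = (if adj a b then sbcm_flux_slope \<gamma> \<delta> (x a - x b) else 0)"
proof -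
  have "sbcm_jac_numer \<gamma> \<delta> N adj x a b
      = (\<Sum>k\<in>N. if k = b then (if adj a b then sbcm_flux_slope \<gamma> \<delta> (x a - x b) else 0) else 0)"
    unfolding sbcm_jac_numer_def using assms(2) by (intro sum.cong refl) auto
  then show ?thesis
    using assms(1,3) by simp
qed

lemma sbcm_jac_numer_diag:
  assumes "\<not> adj a a"
  shows "sbcm_jac_numer \<gamma> \<delta> N adj x a a = (\<Sum>k\<in>N. if adj a k then - sbcm_flux_slope \<gamma> \<delta> (x a - x k) else 0)"
  unfolding sbcm_jac_numer_def using assms by (intro sum.cong refl) auto

lemma sbcm_jac_numer_sym:
  assumes "sbcm_graph N adj Z" "a \<in> N" "b \<in> N"
  shows "sbcm_jac_numer \<gamma> \<delta> N adj x a b = sbcm_jac_numer \<gamma> \<delta> N adj x b a"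
proof (cases "a = b")
  case False
  have "sbcm_flux_slope \<gamma> \<delta> (x b - x a) = sbcm_flux_slope \<gamma> \<delta> (x a - x b)"
    using sbcm_flux_slope_minus[of \<gamma> \<delta> "x a - x b"] by simp
  then show ?thesis
    using assms False sbcm_jac_numer_offdiag[of N] unfolding sbcm_graph_def by auto
qed simp

lemma sbcm_jac_numer_diag_pos:
  assumes "sbcm_graph N adj Z" "i \<in> N - Z"
    and "\<And>k. adj i k \<Longrightarrow> sbcm_flux_slope \<gamma> \<delta> (x i - x k) < 0"
  shows "sbcm_jac_numer \<gamma> \<delta> N adj x i i > 0"
proof -
  obtain b where "adj i b" "b \<in> N"
    using assms(1,2) unfolding sbcm_graph_def by blast
  with assms show ?thesis
    unfolding sbcm_graph_def
    by (subst sbcm_jac_numer_diag) (auto intro!: sum_pos2[of N b] simp: less_imp_le)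
qed

theorem theorem2:
  fixes N Z :: "'a set" and adj :: "'a \<Rightarrow> 'a \<Rightarrow> bool" and x :: "'a \<Rightarrow> real"
    and \<gamma> \<delta> :: real
  assumes "sbcm_graph N adj Z"
    and "\<gamma> > 0" and "\<delta> \<ge> 0"
    and "sbcm_lin_stable \<gamma> \<delta> N adj Z x"
  shows "\<forall>i \<in> N - Z. \<exists>j. adj i j \<and> \<bar>x i - x j\<bar> \<le> sqrt (max \<delta> (1 / \<gamma>))"
proof (rule ccontr)
  assume "\<not> ?thesis"
  then obtain i where i: "i \<in> N - Z" and far: "\<And>j. adj i j \<Longrightarrow> sqrt (max \<delta> (1 / \<gamma>)) < \<bar>x i - x j\<bar>"
    by (auto simp: not_le)
  let ?D = "sbcm_degree \<gamma> \<delta> N adj x" and ?L = "sbcm_jac_numer \<gamma> \<delta> N adj x"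
  have fin: "finite (N - Z)"
    using assms(1) by (simp add: sbcm_graph_def)
  have D_pos: "\<forall>k\<in>N - Z. ?D k > 0"
    using sbcm_degree_pos[OF assms(1)] by blast
  have "?L i i > 0"
    using sbcm_jac_numer_diag_pos[OF assms(1) i] sbcm_flux_slope_neg[OF assms(2) far] by blast
  then obtain lam v where "lam > 0" "\<exists>k\<in>N - Z. v k \<noteq> 0" "\<forall>k\<in>N - Z. (\<Sum>j\<in>N - Z. ?L k j * v j) = lam * ?D k * v k"
    using generalized_eigenvector_pos[OF fin D_pos _ i] sbcm_jac_numer_sym[OF assms(1)] by blast
  moreover have "\<forall>k\<in>N - Z. \<forall>j. sbcm_jac \<gamma> \<delta> N adj x k j = ?L k j / ?D k"
    using assms(1,4) D_pos sbcm_jac_at_steady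
    unfolding sbcm_lin_stable_def sbcm_steady_def sbcm_graph_def by (metis less_irrefl)
  ultimately have "is_eigenvalue_on (N - Z) (sbcm_jac \<gamma> \<delta> N adj x) (complex_of_real lam)"
    using D_pos by (intro is_eigenvalue_on_row_scaled) (auto simp: less_imp_neq[symmetric])
  with \<open>lam > 0\<close> show False
    using assms(4) unfolding sbcm_lin_stable_def by fastforce
qed

end
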